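(* Let $\bar r>0$ and $0<\sigma_1<\frac12<\sigma_2$ be such that $\gamma(\hat\omega_{\sigma_1,y})<\frac12$ for all $y\in\mathbb{R}^3$, $\gamma(\hat\omega_{\sigma_2,y})>\frac12$ for all $|y|\le\bar r$, and $\sup\{I_0(\hat\omega_{\sigma,y}):(\sigma,y)\in\partial\mathcal{H}\}<\bar c$, where $\mathcal{H}=\{(\sigma,y):\sigma\in[\sigma_1,\sigma_2],|y|\le\bar r\}$. Then there exist $(\tilde\sigma,\tilde y)\in\partial\mathcal{H}$ and $(\bar\sigma,\bar y)$ in the interior of $\mathcal{H}$ such that $$\beta(\omega_{\tilde\sigma,\tilde y})=0,\quad\gamma(\omega_{\tilde\sigma,\tilde y})\ge\tfrac12,\qquad \beta(\omega_{\bar\sigma,\bar y})=0,\quad\gamma(\omega_{\bar\sigma,\bar y})=\tfrac12.$$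
   Context: $W,K:\mathbb{R}^3\to\mathbb{R}$ measurable with $W\ge0$, $W(x)\to0$ as $|x|\to\infty$, $W\in L^{3/2}(\mathbb{R}^3)$; $K\ge0$, $K\not\equiv0$, $K(x)\to0$, $K\in L^2(\mathbb{R}^3)$. $S=\inf\{\int|\nabla u|^2/(\int u^6)^{1/3}:u\in\mathcal{D}^{1,2}(\mathbb{R}^3)\setminus\{0\}\}$. $\phi_u\in\mathcal{D}^{1,2}$ solves $-\Delta\phi=Ku^2$. $I_0(u)=\frac12\int(|\nabla u|^2+Wu^2)+\frac14\int K\phi_uu^2-\frac16\int u^6$ on $\mathcal{D}^{1,2}$, $\mathcal{N}_0=\{u\ne0:I_0'(u)[u]=0\}$; $\beta(u)=|u|_6^{-6}\int\frac{x}{1+|x|}u^6$, $\gamma(u)=|u|_6^{-6}\int|\frac{x}{1+|x|}-\beta(u)|u^6$; $\mathcal{B}_0=\inf\{I_0(u):u\in\mathcal{N}_0,\beta(u)=0,\gamma(u)=\frac12\}$. A number $\bar c$ is fixed with $\frac13S^{3/2}<\bar c<\min\{\frac12(\mathcal{B}_0+\frac13S^{3/2}),\frac12S^{3/2}\}$ and, if $A:=(1+|W|_{3/2}/S+|K|_2^2/S^{3/2})^3(1+\frac{3}{4S}|W|_{3/2})<2$, also $\bar c<\frac23S^{3/2}A^{-1}$. $I_\infty(u)=\frac12\int|\nabla u|^2-\frac16\int u^6$, $\mathcal{N}_\infty$ its Nehari set. $\omega\in C_0^\infty(B_1(0))$ is fixed with $\omega\ge0$, $\omega\in\mathcal{N}_\infty$,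 $I_\infty(\omega)=\Sigma\in(\frac13S^{3/2},\bar c)$, radial and radially nonincreasing; $\omega_{\sigma,y}(x)=\sigma^{-1/2}\omega((x-y)/\sigma)$ on $B_\sigma(y)$, $0$ elsewhere; $\hat\omega_{\sigma,y}=t\omega_{\sigma,y}$ with $t>0$ the unique number such that $t\omega_{\sigma,y}\in\mathcal{N}_0$. $\partial\mathcal{H}$ and the interior are taken in $\mathbb{R}\times\mathbb{R}^3$. *)

theory Defs
  imports "HOL-Analysis.Analysis"
begin

type_synonym R3 = "real^3"

definition pd :: "3 \<Rightarrow> (R3 \<Rightarrow> real) \<Rightarrow> R3 \<Rightarrow> real" where
  "pd i f x = frechet_derivative f (at x) (axis i 1)"

primrec pds :: "3 list \<Rightarrow> (R3 \<Rightarrow> real) \<Rightarrow> R3 \<Rightarrow> real" where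
  "pds [] f = f"
| "pds (i # is) f = pd i (pds is f)"

definition smooth :: "(R3 \<Rightarrow> real) \<Rightarrow> bool" where
  "smooth f \<longleftrightarrow> (\<forall>is x. pds is f differentiable (at x))"

definition test_fun :: "(R3 \<Rightarrow> real) \<Rightarrow> bool" where
  "test_fun f \<longleftrightarrow> smooth f \<and> compact (closure {x. f x \<noteq> 0})"

definition weak_grad :: "(R3 \<Rightarrow> real) \<Rightarrow> (R3 \<Rightarrow> R3) \<Rightarrow> bool" where
  "weak_grad u g \<longleftrightarrow> g \<in> borel_measurable lebesgue
     \<and> integrable lebesgue (\<lambda>x. (norm (g x))\<^sup>2)
     \<and> (\<forall>\<phi> i. test_fun \<phi> \<longrightarrow>
          (LINT x|lebesgue. u x * pd i \<phi> x) = - (LINT x|lebesgue. (g x $ i) * \<phi> x))"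

definition D12 :: "(R3 \<Rightarrow> real) \<Rightarrow> bool" where
  "D12 u \<longleftrightarrow> u \<in> borel_measurable lebesgue \<and> integrable lebesgue (\<lambda>x. (u x) ^ 6)
     \<and> (\<exists>g. weak_grad u g)"

definition grad :: "(R3 \<Rightarrow> real) \<Rightarrow> R3 \<Rightarrow> R3" where
  "grad u = (SOME g. weak_grad u g)"

definition nonzero :: "(R3 \<Rightarrow> real) \<Rightarrow> bool" where
  "nonzero u \<longleftrightarrow> \<not> (AE x in lebesgue. u x = 0)"

definition S_const :: real where
  "S_const = Inf {(LINT x|lebesgue. (norm (grad u x))\<^sup>2) / (LINT x|lebesgue. (u x) ^ 6) powr (1/3)
                  | u. D12 u \<and> nonzero u}"

text \<open>phi_u: a solution in D^{1,2} of -Delta phi = K u^2 (weak formulation); any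
  representative (they agree a.e.).\<close>
definition phi :: "(R3 \<Rightarrow> real) \<Rightarrow> (R3 \<Rightarrow> real) \<Rightarrow> R3 \<Rightarrow> real" where
  "phi K u = (SOME \<phi>. D12 \<phi> \<and> (\<forall>v. D12 v \<longrightarrow>
       (LINT x|lebesgue. grad \<phi> x \<bullet> grad v x) = (LINT x|lebesgue. K x * (u x)\<^sup>2 * v x)))"

definition I0 :: "(R3 \<Rightarrow> real) \<Rightarrow> (R3 \<Rightarrow> real) \<Rightarrow> (R3 \<Rightarrow> real) \<Rightarrow> real" where
  "I0 W K u = 1/2 * (LINT x|lebesgue. (norm (grad u x))\<^sup>2 + W x * (u x)\<^sup>2)
            + 1/4 * (LINT x|lebesgue. K x * phi K u x * (u x)\<^sup>2)
            - 1/6 * (LINT x|lebesgue. (u x) ^ 6)"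

text \<open>Nehari set: I_0'(u)[u] = d/dt I_0(t u) at t = 1 equals 0.\<close>
definition N0 :: "(R3 \<Rightarrow> real) \<Rightarrow> (R3 \<Rightarrow> real) \<Rightarrow> (R3 \<Rightarrow> real) set" where
  "N0 W K = {u. D12 u \<and> nonzero u \<and>
      ((\<lambda>t. I0 W K (\<lambda>x. t * u x)) has_real_derivative 0) (at 1)}"

definition Iinf :: "(R3 \<Rightarrow> real) \<Rightarrow> real" where
  "Iinf u = 1/2 * (LINT x|lebesgue. (norm (grad u x))\<^sup>2) - 1/6 * (LINT x|lebesgue. (u x) ^ 6)"

definition Ninf :: "(R3 \<Rightarrow> real) set" where
  "Ninf = {u. D12 u \<and> nonzero u \<and> ((\<lambda>t. Iinf (\<lambda>x. t * u x)) has_real_derivative 0) (at 1)}"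

definition beta :: "(R3 \<Rightarrow> real) \<Rightarrow> R3" where
  "beta u = (1 / (LINT x|lebesgue. (u x) ^ 6)) *\<^sub>R
             (LINT x|lebesgue. ((u x) ^ 6) *\<^sub>R ((1 / (1 + norm x)) *\<^sub>R x))"

definition gamma :: "(R3 \<Rightarrow> real) \<Rightarrow> real" where
  "gamma u = (1 / (LINT x|lebesgue. (u x) ^ 6)) *
             (LINT x|lebesgue. norm ((1 / (1 + norm x)) *\<^sub>R x - beta u) * (u x) ^ 6)"

definition B0 :: "(R3 \<Rightarrow> real) \<Rightarrow> (R3 \<Rightarrow> real) \<Rightarrow> real" where
  "B0 W K = Inf (I0 W K ` {u \<in> N0 W K. beta u = 0 \<and> gamma u = 1/2})"

definition omega_sy :: "(R3 \<Rightarrow> real) \<Rightarrow> real \<Rightarrow> R3 \<Rightarrow> R3 \<Rightarrow> real" where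
  "omega_sy \<omega> \<sigma> y x = (if x \<in> ball y \<sigma> then \<sigma> powr (-1/2) * \<omega> ((1/\<sigma>) *\<^sub>R (x - y)) else 0)"

definition omega_hat :: "(R3 \<Rightarrow> real) \<Rightarrow> (R3 \<Rightarrow> real) \<Rightarrow> (R3 \<Rightarrow> real) \<Rightarrow> real \<Rightarrow> R3 \<Rightarrow> R3 \<Rightarrow> real" where
  "omega_hat W K \<omega> \<sigma> y x =
     (THE t. t > 0 \<and> (\<lambda>z. t * omega_sy \<omega> \<sigma> y z) \<in> N0 W K) * omega_sy \<omega> \<sigma> y x"

definition Hset :: "real \<Rightarrow> real \<Rightarrow> real \<Rightarrow> (real \<times> R3) set" where
  "Hset \<sigma>1 \<sigma>2 r = {(\<sigma>, y). \<sigma>1 \<le> \<sigma> \<and> \<sigma> \<le> \<sigma>2 \<and> norm y \<le> r}"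

end

theory Submission
  imports Defs
begin

text \<open>As \<omega> is even, the integrand defining
  beta(omega_sy \<omega> \<sigma> 0) is odd with bounded support, so beta vanishes, and gamma(omega_sy \<omega> \<sigma> 0) becomes
  the mean of |x|/(1+|x|) with respect to the weight (omega_sy \<omega> \<sigma> 0)^6, which depends continuously on
  \<sigma> by dominated convergence. On the support ball B_\<sigma>(0) one has |x|/(1+|x|) < \<sigma>, so gamma is at most
  \<sigma>1 < 1/2 at \<sigma>1, while at \<sigma>2 it exceeds 1/2 by the hypothesis at y = 0 (gamma is invariant under
  the nonzero rescaling defining omega_hat). The intermediate value theorem gives \<sigma>b in (\<sigma>1, \<sigma>2)
  with gamma = 1/2; the points are (\<sigma>b, 0) in the interior and (\<sigma>2, 0) on the boundary. Of the
  hypotheses, only those making \<omega> a nonzero, smooth, even bump supported in the unit ball, the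
  bounds on \<sigma>1, \<sigma>2, rbar and gam2 at y = 0 are used.\<close>

lemma continuous_on_integral_dominated:
  fixes g :: "'a::metric_space \<Rightarrow> 'b \<Rightarrow> real"
  assumes meas: "\<And>s. s \<in> S \<Longrightarrow> g s \<in> borel_measurable M"
    and cont: "\<And>x. continuous_on S (\<lambda>s. g s x)"
    and dom: "\<And>s x. s \<in> S \<Longrightarrow> \<bar>g s x\<bar> \<le> w x"
    and w: "integrable M w"
  shows "continuous_on S (\<lambda>s. LINT x|M. g s x)"
proof (rule continuous_on_sequentiallyI)
  fix u :: "nat \<Rightarrow> 'a" and s
  assume u: "\<forall>n. u n \<in> S" and s: "s \<in> S" and lim: "u \<longlonglongrightarrow> s"
  show "(\<lambda>n. LINT x|M. g (u n) x) \<longlonglongrightarrow> (LINT x|M. g s x)"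
  proof (rule integral_dominated_convergence[OF _ _ w])
    show "AE x in M. (\<lambda>n. g (u n) x) \<longlonglongrightarrow> g s x"
      using continuous_on_tendsto_compose[OF cont lim s] u by simp
  qed (use meas dom u s in auto)
qed

lemma integral_odd_eq_0:
  fixes f :: "'a::euclidean_space \<Rightarrow> 'b::euclidean_space"
  assumes odd: "\<And>x. f (-x) = - f x" and supp: "bounded {x. f x \<noteq> 0}"
  shows "(LINT x|lebesgue. f x) = 0"
proof (cases "integrable lebesgue f")
  case True
  define I where "I = (LINT x|lebesgue. f x)"
  obtain b where b: "{x. f x \<noteq> 0} \<subseteq> cbox (-b) b"
    using bounded_subset_cbox_symmetric[OF supp] .
  have "(f has_integral I) UNIV"
    unfolding I_def by (rule has_integral_integral_lebesgue[OF True])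
  moreover have "(\<lambda>x. if x \<in> cbox (-b) b then f x else 0) = f"
  proof
    show "(if x \<in> cbox (-b) b then f x else 0) = f x" for x
      using b by (cases "x \<in> cbox (-b) b") auto
  qed
  ultimately have I: "(f has_integral I) (cbox (-b) b)"
    by (metis has_integral_restrict_UNIV)
  have "((\<lambda>x. - f x) has_integral I) (cbox (-b) b)"
    using has_integral_reflect_lemma[OF I] by (simp add: odd)
  from has_integral_neg[OF this] have "(f has_integral -I) (cbox (-b) b)"
    by simp
  then have "-I = I" using I has_integral_unique by blast
  then have "2 *\<^sub>R I = 0"
    by (metis scaleR_2 add.right_inverse)
  then show ?thesis unfolding I_def by simp
qed (simp add: not_integrable_integral_eq)

lemma integral_pos_of_continuous:
  fixes f :: "'a::euclidean_space \<Rightarrow> real"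
  assumes cont: "continuous_on UNIV f" and nonneg: "\<And>x. 0 \<le> f x"
    and pos: "0 < f x0" and int: "integrable lebesgue f"
  shows "0 < (LINT x|lebesgue. f x)"
proof (rule ccontr)
  assume "\<not> ?thesis"
  moreover have "0 \<le> (LINT x|lebesgue. f x)"
    using nonneg by simp
  ultimately have "(LINT x|lebesgue. f x) = 0"
    by linarith
  then have "AE x in lebesgue. f x = 0"
    using integral_nonneg_eq_0_iff_AE[OF int] nonneg by simp
  then obtain N where N: "N \<in> null_sets lebesgue" "{x. f x \<noteq> 0} \<subseteq> N"
    by (auto simp: eventually_ae_filter)
  then have "negligible {x. f x \<noteq> 0}"
    using negligible_subset negligible_iff_null_sets by blast
  moreover have "open {x. f x \<noteq> 0}"
    using open_Collect_neq[OF cont continuous_on_const] .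
  moreover have "x0 \<in> {x. f x \<noteq> 0}"
    using pos by simp
  ultimately show False
    using open_not_negligible by blast
qed

lemma smooth_imp_continuous_on:
  assumes "smooth f"
  shows "continuous_on UNIV f"
proof -
  from assms have "f differentiable (at x)" for x
    unfolding smooth_def by (metis pds.simps(1))
  then show ?thesis
    by (intro continuous_at_imp_continuous_on ballI differentiable_imp_continuous_within)
qed

lemma eq_0_outside_closure_support:
  assumes "closure {x. f x \<noteq> 0} \<subseteq> S" and "x \<notin> S"
  shows "f x = 0"
  using assms by (meson closure_subset mem_Collect_eq subsetD)

lemma nonzero_imp_ex_neq_0: "nonzero u \<Longrightarrow> \<exists>x. u x \<noteq> 0"
  unfolding nonzero_def by auto

abbreviation shrink :: "R3 \<Rightarrow> R3" where
  "shrink x \<equiv> (1 / (1 + norm x)) *\<^sub>R x"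

lemma norm_shrink: "norm (shrink x) = norm x / (1 + norm x)"
  by (simp add: add_pos_nonneg)

lemma norm_shrink_le_1: "norm (shrink x) \<le> 1"
  unfolding norm_shrink by (simp add: add_pos_nonneg)

lemma norm_shrink_le: "norm (shrink x) \<le> norm x"
  unfolding norm_shrink by (simp add: add_pos_nonneg divide_le_eq mult_le_cancel_left1)

lemma continuous_on_shrink: "continuous_on UNIV shrink"
  by (intro continuous_intros) (auto simp: add_nonneg_eq_0_iff)

lemma norm_shrink_measurable: "(\<lambda>x. norm (shrink x)) \<in> borel_measurable lebesgue"
  using continuous_on_norm[OF continuous_on_shrink]
  by (simp add: borel_measurable_continuous_onI measurable_completion del: norm_scaleR)

lemma beta_scale: "c \<noteq> 0 \<Longrightarrow> beta (\<lambda>x. c * u x) = beta u"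
  by (simp add: beta_def power_mult_distrib scaleR_scaleR[symmetric] del: scaleR_scaleR)
     (simp add: field_split_simps)

lemma gamma_scale: "gamma (\<lambda>x. c * u x) = (if c = 0 then 0 else gamma u)"
  by (simp add: gamma_def beta_scale power_mult_distrib mult.left_commute)

lemma gamma_eq_of_beta_eq_0:
  "beta u = 0 \<Longrightarrow> gamma u = (LINT x|lebesgue. norm (shrink x) * u x ^ 6) / (LINT x|lebesgue. u x ^ 6)"
  by (simp add: gamma_def)

lemma omega_sy_eq_0: "\<sigma> \<le> dist y x \<Longrightarrow> omega_sy \<omega> \<sigma> y x = 0"
  by (simp add: omega_sy_def)

lemma beta_omega_sy_origin:
  assumes even: "\<And>x. \<omega> (-x) = \<omega> x"
  shows "beta (omega_sy \<omega> \<sigma> 0) = 0"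
proof -
  have "(LINT x|lebesgue. omega_sy \<omega> \<sigma> 0 x ^ 6 *\<^sub>R shrink x) = 0"
  proof (rule integral_odd_eq_0)
    show "omega_sy \<omega> \<sigma> 0 (-x) ^ 6 *\<^sub>R shrink (-x) = - (omega_sy \<omega> \<sigma> 0 x ^ 6 *\<^sub>R shrink x)" for x
      using even[of "(1/\<sigma>) *\<^sub>R x"] by (simp add: omega_sy_def)
    have "{x. omega_sy \<omega> \<sigma> 0 x ^ 6 *\<^sub>R shrink x \<noteq> 0} \<subseteq> ball 0 \<sigma>"
      by (auto simp: omega_sy_def)
    then show "bounded {x. omega_sy \<omega> \<sigma> 0 x ^ 6 *\<^sub>R shrink x \<noteq> 0}"
      using bounded_ball bounded_subset by blast
  qed
  then show ?thesis
    by (simp add: beta_def)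
qed

context
  fixes \<omega> :: "R3 \<Rightarrow> real"
  assumes continuous_omega: "continuous_on UNIV \<omega>"
    and omega_eq_0: "\<And>x. 1 \<le> norm x \<Longrightarrow> \<omega> x = 0"
begin

lemma omega_sy_origin: "0 < \<sigma> \<Longrightarrow> omega_sy \<omega> \<sigma> 0 x = \<sigma> powr (-1/2) * \<omega> ((1/\<sigma>) *\<^sub>R x)"
  using omega_eq_0[of "(1/\<sigma>) *\<^sub>R x"] by (auto simp: omega_sy_def field_simps)

lemma continuous_on_omega_sy_origin:
  assumes "0 < \<sigma>"
  shows "continuous_on UNIV (omega_sy \<omega> \<sigma> 0)"
proof -
  have "continuous_on UNIV (\<lambda>x. \<sigma> powr (-1/2) * \<omega> ((1/\<sigma>) *\<^sub>R x))"
    by (intro continuous_intros continuous_on_compose2[OF continuous_omega]) auto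
  then show ?thesis
    using assms by (simp add: omega_sy_origin)
qed

lemma continuous_on_omega_sy_origin_scale: "continuous_on {0<..} (\<lambda>\<sigma>. omega_sy \<omega> \<sigma> 0 x)"
proof -
  have "continuous_on {0<..} (\<lambda>\<sigma>. \<sigma> powr (-1/2) * \<omega> ((1/\<sigma>) *\<^sub>R x))"
    by (intro continuous_intros continuous_on_compose2[OF continuous_omega]) auto
  then show ?thesis
    by (rule continuous_on_cong[THEN iffD1, rotated 2]) (simp_all add: omega_sy_origin)
qed

lemma omega_sy_origin_measurable: "0 < \<sigma> \<Longrightarrow> omega_sy \<omega> \<sigma> 0 \<in> borel_measurable lebesgue"
  by (simp add: continuous_on_omega_sy_origin borel_measurable_continuous_onI measurable_completion)

lemma omega_bounded: obtains M where "\<And>x. \<bar>\<omega> x\<bar> \<le> M"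
proof -
  have "compact (\<omega> ` cball 0 1)"
    by (rule compact_continuous_image[OF continuous_on_subset[OF continuous_omega] compact_cball]) auto
  then obtain B where B: "\<forall>y\<in>\<omega> ` cball 0 1. norm y \<le> B"
    using compact_imp_bounded bounded_iff by metis
  have "\<bar>\<omega> x\<bar> \<le> max B 0" for x
  proof (cases "norm x \<le> 1")
    case True
    then have "\<bar>\<omega> x\<bar> \<le> B"
      using B by simp
    then show ?thesis
      by linarith
  qed (simp add: omega_eq_0)
  then show ?thesis ..
qed

lemma omega_sy_origin_dominated:
  assumes "0 < a"
  obtains w where "integrable lebesgue w"
    and "\<And>\<sigma> x. \<sigma> \<in> {a..b} \<Longrightarrow> \<bar>omega_sy \<omega> \<sigma> 0 x\<bar> ^ 6 \<le> w x"
proof -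
  obtain M where M: "\<And>x. \<bar>\<omega> x\<bar> \<le> M"
    using omega_bounded by blast
  define C where "C = a powr (-1/2) * M"
  have "\<bar>omega_sy \<omega> \<sigma> 0 x\<bar> ^ 6 \<le> C ^ 6 * indicator (cball 0 b) x" if "\<sigma> \<in> {a..b}" for \<sigma> x
  proof (cases "norm x < \<sigma>")
    case True
    have "\<sigma> powr (-1/2) \<le> a powr (-1/2)"
      using that assms by (intro powr_mono2') auto
    then have "\<bar>omega_sy \<omega> \<sigma> 0 x\<bar> \<le> C"
      unfolding C_def using that assms M[of "(1/\<sigma>) *\<^sub>R x"] M[of 0]
      by (auto simp: omega_sy_origin abs_mult intro!: mult_mono)
    then have "\<bar>omega_sy \<omega> \<sigma> 0 x\<bar> ^ 6 \<le> C ^ 6"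
      by (rule power_mono) simp
    then show ?thesis
      using True that by simp
  qed (simp add: omega_sy_eq_0)
  moreover have "integrable lebesgue (\<lambda>x. C ^ 6 * indicat_real (cball (0::R3) b) x)"
    using lmeasurable_cball lmeasurable_iff_integrable by (intro integrable_mult_right) blast
  ultimately show ?thesis
    using that by blast
qed

lemma integrable_omega_sy_origin_moment:
  assumes "0 < \<sigma>" and h: "h \<in> borel_measurable lebesgue" "\<And>x. \<bar>h x\<bar> \<le> 1"
  shows "integrable lebesgue (\<lambda>x. h x * omega_sy \<omega> \<sigma> 0 x ^ 6)"
proof -
  obtain w where w: "integrable lebesgue w"
    "\<And>\<sigma>' x. \<sigma>' \<in> {\<sigma>..\<sigma>} \<Longrightarrow> \<bar>omega_sy \<omega> \<sigma>' 0 x\<bar> ^ 6 \<le> w x"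
    using omega_sy_origin_dominated[OF assms(1)] by blast
  show ?thesis
  proof (rule Bochner_Integration.integrable_bound[OF w(1)])
    show "(\<lambda>x. h x * omega_sy \<omega> \<sigma> 0 x ^ 6) \<in> borel_measurable lebesgue"
      using h(1) omega_sy_origin_measurable[OF assms(1)] by measurable
    have bound: "\<bar>h x * omega_sy \<omega> \<sigma> 0 x ^ 6\<bar> \<le> w x" for x
      using w(2)[of \<sigma> x] mult_right_mono[OF h(2)[of x], of "omega_sy \<omega> \<sigma> 0 x ^ 6"]
      by (simp add: abs_mult zero_le_even_power)
    show "AE x in lebesgue. norm (h x * omega_sy \<omega> \<sigma> 0 x ^ 6) \<le> norm (w x)"
      using order_trans[OF bound abs_ge_self] by (intro AE_I2) simp
  qed
qed

lemma continuous_on_omega_sy_origin_moment: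
  assumes "0 < a" and h: "h \<in> borel_measurable lebesgue" "\<And>x. \<bar>h x\<bar> \<le> 1"
  shows "continuous_on {a..b} (\<lambda>\<sigma>. LINT x|lebesgue. h x * omega_sy \<omega> \<sigma> 0 x ^ 6)"
proof -
  obtain w where w: "integrable lebesgue w"
    "\<And>\<sigma> x. \<sigma> \<in> {a..b} \<Longrightarrow> \<bar>omega_sy \<omega> \<sigma> 0 x\<bar> ^ 6 \<le> w x"
    using omega_sy_origin_dominated[OF assms(1)] by auto
  show ?thesis
  proof (rule continuous_on_integral_dominated[OF _ _ _ w(1)])
    show "(\<lambda>x. h x * omega_sy \<omega> \<sigma> 0 x ^ 6) \<in> borel_measurable lebesgue" if "\<sigma> \<in> {a..b}" for \<sigma>
    proof -
      have "0 < \<sigma>"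
        using that assms by auto
      then show ?thesis
        using h(1) omega_sy_origin_measurable by measurable
    qed
    show "continuous_on {a..b} (\<lambda>\<sigma>. h x * omega_sy \<omega> \<sigma> 0 x ^ 6)" for x
    proof -
      have "{a..b} \<subseteq> {0<..}"
        using assms by auto
      then show ?thesis
        by (intro continuous_intros continuous_on_subset[OF continuous_on_omega_sy_origin_scale])
    qed
    show "\<bar>h x * omega_sy \<omega> \<sigma> 0 x ^ 6\<bar> \<le> w x" if "\<sigma> \<in> {a..b}" for \<sigma> x
      using w(2)[OF that, of x] mult_right_mono[OF h(2)[of x], of "omega_sy \<omega> \<sigma> 0 x ^ 6"]
      by (simp add: abs_mult zero_le_even_power)
  qed
qed

lemma integral_omega_sy_origin_pos:
  assumes "0 < \<sigma>" and "\<omega> z \<noteq> 0"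
  shows "0 < (LINT x|lebesgue. omega_sy \<omega> \<sigma> 0 x ^ 6)"
proof (rule integral_pos_of_continuous)
  show "continuous_on UNIV (\<lambda>x. omega_sy \<omega> \<sigma> 0 x ^ 6)"
    using continuous_on_omega_sy_origin[OF assms(1)] by (intro continuous_intros)
  show "0 < omega_sy \<omega> \<sigma> 0 (\<sigma> *\<^sub>R z) ^ 6"
    using assms by (simp add: omega_sy_origin)
  show "integrable lebesgue (\<lambda>x. omega_sy \<omega> \<sigma> 0 x ^ 6)"
    using integrable_omega_sy_origin_moment[OF assms(1), of "\<lambda>_. 1"] by simp
qed (simp add: zero_le_even_power)

lemma gamma_omega_sy_origin_le:
  assumes even: "\<And>x. \<omega> (-x) = \<omega> x" and "0 < \<sigma>"
  shows "gamma (omega_sy \<omega> \<sigma> 0) \<le> \<sigma>"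
proof -
  let ?u = "omega_sy \<omega> \<sigma> 0"
  let ?N = "LINT x|lebesgue. norm (shrink x) * ?u x ^ 6" and ?D = "LINT x|lebesgue. ?u x ^ 6"
  have "?N \<le> (LINT x|lebesgue. \<sigma> * ?u x ^ 6)"
  proof (rule integral_mono)
    show "integrable lebesgue (\<lambda>x. norm (shrink x) * ?u x ^ 6)"
      by (rule integrable_omega_sy_origin_moment[OF assms(2) norm_shrink_measurable])
        (use norm_shrink_le_1 in simp)
    show "integrable lebesgue (\<lambda>x. \<sigma> * ?u x ^ 6)"
      using integrable_omega_sy_origin_moment[OF assms(2), of "\<lambda>_. 1"] by simp
    show "norm (shrink x) * ?u x ^ 6 \<le> \<sigma> * ?u x ^ 6" for x
    proof (cases "norm x < \<sigma>")
      case True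
      then show ?thesis
        using norm_shrink_le[of x] by (intro mult_right_mono) (auto simp: zero_le_even_power)
    qed (simp add: omega_sy_eq_0)
  qed
  then have N_le: "?N \<le> \<sigma> * ?D"
    by simp
  have "?N / ?D \<le> \<sigma>"
  proof (cases "?D = 0")
    case False
    moreover have "0 \<le> ?D"
      by (simp add: zero_le_even_power)
    ultimately have "0 < ?D"
      by linarith
    then show ?thesis
      using N_le by (simp add: pos_divide_le_eq mult.commute)
  qed (use assms(2) in simp)
  then show ?thesis
    by (simp add: gamma_eq_of_beta_eq_0 beta_omega_sy_origin[of \<omega>, OF even])
qed

lemma continuous_on_gamma_omega_sy_origin:
  assumes even: "\<And>x. \<omega> (-x) = \<omega> x" and "0 < a" and "\<omega> z \<noteq> 0"
  shows "continuous_on {a..b} (\<lambda>\<sigma>. gamma (omega_sy \<omega> \<sigma> 0))"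
proof -
  have "continuous_on {a..b} (\<lambda>\<sigma>. LINT x|lebesgue. norm (shrink x) * omega_sy \<omega> \<sigma> 0 x ^ 6)"
    by (rule continuous_on_omega_sy_origin_moment[OF assms(2) norm_shrink_measurable])
      (use norm_shrink_le_1 in simp)
  moreover have "continuous_on {a..b} (\<lambda>\<sigma>. LINT x|lebesgue. omega_sy \<omega> \<sigma> 0 x ^ 6)"
    using continuous_on_omega_sy_origin_moment[OF assms(2), of "\<lambda>_. 1"] by simp
  moreover have "(LINT x|lebesgue. omega_sy \<omega> \<sigma> 0 x ^ 6) \<noteq> 0" if "\<sigma> \<in> {a..b}" for \<sigma>
  proof -
    have "0 < \<sigma>"
      using that assms(2) by simp
    then show ?thesis
      using integral_omega_sy_origin_pos[OF _ assms(3)] by (metis less_irrefl)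
  qed
  ultimately have "continuous_on {a..b} (\<lambda>\<sigma>.
      (LINT x|lebesgue. norm (shrink x) * omega_sy \<omega> \<sigma> 0 x ^ 6)
      / (LINT x|lebesgue. omega_sy \<omega> \<sigma> 0 x ^ 6))"
    by (intro continuous_on_divide) blast+
  then show ?thesis
    by (simp add: gamma_eq_of_beta_eq_0 beta_omega_sy_origin[of \<omega>, OF even])
qed

end

lemma gamma_omega_hat_eq:
  assumes "0 < gamma (omega_hat W K \<omega> \<sigma> y)"
  shows "gamma (omega_hat W K \<omega> \<sigma> y) = gamma (omega_sy \<omega> \<sigma> y)"
  using assms
    gamma_scale[of "THE t. 0 < t \<and> (\<lambda>z. t * omega_sy \<omega> \<sigma> y z) \<in> N0 W K" "omega_sy \<omega> \<sigma> y"]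
  by (simp add: omega_hat_def[abs_def] split: if_splits)

lemma Hset_eq: "Hset a b r = {a..b} \<times> cball 0 r"
  by (auto simp: Hset_def)

lemma interior_Hset: "interior (Hset a b r) = {a<..<b} \<times> ball 0 r"
  by (simp add: Hset_eq interior_Times)

lemma Hset_right_end_in_frontier:
  assumes "a \<le> b" and "norm y \<le> r"
  shows "(b, y) \<in> frontier (Hset a b r)"
proof -
  have "closed (Hset a b r)"
    by (simp add: Hset_eq closed_Times)
  then show ?thesis
    using assms by (simp add: frontier_def interior_Hset) (simp add: Hset_def)
qed

theorem lemma4p2:
  fixes W K \<omega> :: "R3 \<Rightarrow> real" and cbar rbar \<sigma>1 \<sigma>2 :: real
  assumes W_meas: "W \<in> borel_measurable lebesgue"
    and W_nonneg: "\<And>x. W x \<ge> 0"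
    and W_lim: "(W \<longlongrightarrow> 0) at_infinity"
    and W_L32: "integrable lebesgue (\<lambda>x. \<bar>W x\<bar> powr (3/2))"
    and K_meas: "K \<in> borel_measurable lebesgue"
    and K_nonneg: "\<And>x. K x \<ge> 0"
    and K_nonzero: "\<not> (AE x in lebesgue. K x = 0)"
    and K_lim: "(K \<longlongrightarrow> 0) at_infinity"
    and K_L2: "integrable lebesgue (\<lambda>x. (K x)\<^sup>2)"
    and cbar_low: "1/3 * S_const powr (3/2) < cbar"
    and cbar_up1: "cbar < 1/2 * (B0 W K + 1/3 * S_const powr (3/2))"
    and cbar_up2: "cbar < 1/2 * S_const powr (3/2)"
    and cbar_up3: "(1 + (LINT x|lebesgue. \<bar>W x\<bar> powr (3/2)) powr (2/3) / S_const
                      + (LINT x|lebesgue. (K x)\<^sup>2) / S_const powr (3/2)) ^ 3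
                   * (1 + 3 / (4 * S_const) * (LINT x|lebesgue. \<bar>W x\<bar> powr (3/2)) powr (2/3)) < 2
                   \<Longrightarrow> cbar < 2/3 * S_const powr (3/2) /
                     ((1 + (LINT x|lebesgue. \<bar>W x\<bar> powr (3/2)) powr (2/3) / S_const
                      + (LINT x|lebesgue. (K x)\<^sup>2) / S_const powr (3/2)) ^ 3
                   * (1 + 3 / (4 * S_const) * (LINT x|lebesgue. \<bar>W x\<bar> powr (3/2)) powr (2/3)))"
    and om_smooth: "smooth \<omega>"
    and om_supp: "closure {x. \<omega> x \<noteq> 0} \<subseteq> ball 0 1"
    and om_nonneg: "\<And>x. \<omega> x \<ge> 0"
    and om_Nehari: "\<omega> \<in> Ninf"
    and om_level: "1/3 * S_const powr (3/2) < Iinf \<omega>" "Iinf \<omega> < cbar"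
    and om_radial: "\<And>x y. norm x = norm y \<Longrightarrow> \<omega> x = \<omega> y"
    and om_noninc: "\<And>x y. norm x \<le> norm y \<Longrightarrow> \<omega> y \<le> \<omega> x"
    and rbar_pos: "rbar > 0"
    and sig: "0 < \<sigma>1" "\<sigma>1 < 1/2" "1/2 < \<sigma>2"
    and gam1: "\<And>y. gamma (omega_hat W K \<omega> \<sigma>1 y) < 1/2"
    and gam2: "\<And>y. norm y \<le> rbar \<Longrightarrow> gamma (omega_hat W K \<omega> \<sigma>2 y) > 1/2"
    and sup_bd: "(SUP p\<in>frontier (Hset \<sigma>1 \<sigma>2 rbar). I0 W K (omega_hat W K \<omega> (fst p) (snd p))) < cbar"
  shows "\<exists>\<sigma>t yt \<sigma>b yb. (\<sigma>t, yt) \<in> frontier (Hset \<sigma>1 \<sigma>2 rbar)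
            \<and> (\<sigma>b, yb) \<in> interior (Hset \<sigma>1 \<sigma>2 rbar)
            \<and> beta (omega_sy \<omega> \<sigma>t yt) = 0 \<and> gamma (omega_sy \<omega> \<sigma>t yt) \<ge> 1/2
            \<and> beta (omega_sy \<omega> \<sigma>b yb) = 0 \<and> gamma (omega_sy \<omega> \<sigma>b yb) = 1/2"
proof -
  have continuous_omega: "continuous_on UNIV \<omega>"
    using om_smooth by (rule smooth_imp_continuous_on)
  have omega_eq_0: "\<omega> x = 0" if "1 \<le> norm x" for x
    using eq_0_outside_closure_support[OF om_supp] that by simp
  have even: "\<omega> (-x) = \<omega> x" for x
    using om_radial[of "-x" x] by simp
  obtain z where z: "\<omega> z \<noteq> 0"
    using om_Nehari nonzero_imp_ex_neq_0 by (auto simp: Ninf_def)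
  define \<gamma> where "\<gamma> \<sigma> = gamma (omega_sy \<omega> \<sigma> 0)" for \<sigma>
  have "continuous_on {\<sigma>1..\<sigma>2} \<gamma>"
    unfolding \<gamma>_def
    using continuous_on_gamma_omega_sy_origin[OF continuous_omega omega_eq_0 even sig(1) z] .
  moreover have "\<gamma> \<sigma>1 < 1/2"
    using gamma_omega_sy_origin_le[OF continuous_omega omega_eq_0 even sig(1)] sig(2)
    by (simp add: \<gamma>_def)
  moreover have "1/2 < \<gamma> \<sigma>2"
    using gam2[of 0] gamma_omega_hat_eq[of W K \<omega> \<sigma>2 0] rbar_pos by (simp add: \<gamma>_def)
  ultimately obtain \<sigma>b where \<sigma>b: "\<sigma>1 \<le> \<sigma>b" "\<sigma>b \<le> \<sigma>2" "\<gamma> \<sigma>b = 1/2"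
    using IVT'[of \<gamma> \<sigma>1 "1/2" \<sigma>2] sig by auto
  with \<open>\<gamma> \<sigma>1 < 1/2\<close> \<open>1/2 < \<gamma> \<sigma>2\<close> have "\<sigma>1 < \<sigma>b" "\<sigma>b < \<sigma>2"
    by (auto simp: order_le_less)
  show ?thesis
  proof (intro exI conjI)
    show "(\<sigma>2, 0) \<in> frontier (Hset \<sigma>1 \<sigma>2 rbar)"
      using Hset_right_end_in_frontier sig rbar_pos by simp
    show "(\<sigma>b, 0) \<in> interior (Hset \<sigma>1 \<sigma>2 rbar)"
      using \<open>\<sigma>1 < \<sigma>b\<close> \<open>\<sigma>b < \<sigma>2\<close> rbar_pos by (simp add: interior_Hset)
    show "gamma (omega_sy \<omega> \<sigma>2 0) \<ge> 1/2" "gamma (omega_sy \<omega> \<sigma>b 0) = 1/2"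
      using \<open>1/2 < \<gamma> \<sigma>2\<close> \<sigma>b(3) by (simp_all add: \<gamma>_def)
  qed (simp_all add: beta_omega_sy_origin even)
qed

end
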